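(* Let $\varphi$ be a Boolean formula in 3-CNF and let $G$ be the graph constructed from $\varphi$ as described in the context. Let $X\subseteq V(G)$ be a minimum cluster deletion set of $G$. Then, for every clause gadget of $G$ (i.e., every $i\in\{1,\dots,m\}$), $X$ contains all vertices of two of the three sides $S_{1,i},S_{2,i},S_{3,i}$ and none of the vertices of the third side.
   Context: Let $\varphi$ consist of clauses $C_1,\dots,C_m$ over variables $x_1,\dots,x_n$, each clause containing exactly three literals, $C_i=(L_i^1\vee L_i^2\vee L_i^3)$. The graph $G$ has vertex set $\{u_{r,s,i}: r\in\{1,2,3\}, s\in\{1,\dots,7\}, i\in\{1,\dots,m\}\}\cup\{v_{r,s,j}: r\in\{1,2\}, s\in\{1,2,3\}, j\in\{1,\dots,n\}\}$ and edge set consisting of: $\{u_{r,s,i},u_{r',s',i}\}$ for all $r\ne r'$ in $\{1,2,3\}$, all $s,s'\in\{1,\dots,7\}$, all $i$; $\{v_{1,s,j},v_{2,s',j}\}$ for all $s,s'\in\{1,2,3\}$, all $j$; $\{u_{r,s,i},v_{1,s',j}\}$ for all $s\in\{1,\dots,7\}$, $s'\in\{1,2,3\}$ whenever $L_i^r = x_j$; and $\{u_{r,s,i},v_{2,s',j}\}$ for all $s\in\{1,\dots,7\}$, $s'\in\{1,2,3\}$ whenever $L_i^r=\neg x_j$. The clause gadget of $C_i$ is the complete tripartite graph on $\{u_{r,s,i}\}$ with sides $S_{r,i}=\{u_{r,s,i}: s\in\{1,\dots,7\}\}$, $r=1,2,3$; the variable gadget of $x_j$ is the complete bipartite graph on $\{v_{r,s,j}\}$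 with sides $T_{r,j}=\{v_{r,s,j}: s\in\{1,2,3\}\}$, $r=1,2$. A cluster deletion set of $G$ is a set $X\subseteq V(G)$ such that $G-X$ contains no induced path on three vertices; it is minimum if it has the smallest possible size. *)

theory Defs
  imports Main
begin

datatype lit = Pos nat | Neg nat

fun lit_var :: "lit \<Rightarrow> nat" where
  "lit_var (Pos j) = j" | "lit_var (Neg j) = j"

(* A 3-CNF formula with clauses C_1..C_m is given by L :: nat => nat => lit,
   where L i r is the literal L_i^r (i in {1..m}, r in {1,2,3}). *)

(* Vertices: U r s i = u_{r,s,i},  V r s j = v_{r,s,j} *)
datatype vtx = U nat nat nat | V nat nat nat

definition cd_vertices :: "nat \<Rightarrow> nat \<Rightarrow> vtx set" where
  "cd_vertices m n =
     {U r s i | r s i. r \<in> {1..3} \<and> s \<in> {1..7} \<and> i \<in> {1..m}}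
   \<union> {V r s j | r s j. r \<in> {1..2} \<and> s \<in> {1..3} \<and> j \<in> {1..n}}"

definition cd_edges :: "nat \<Rightarrow> nat \<Rightarrow> (nat \<Rightarrow> nat \<Rightarrow> lit) \<Rightarrow> vtx set set" where
  "cd_edges m n L =
     {{U r s i, U r' s' i} | r s r' s' i. r \<in> {1..3} \<and> r' \<in> {1..3} \<and> r \<noteq> r'
         \<and> s \<in> {1..7} \<and> s' \<in> {1..7} \<and> i \<in> {1..m}}
   \<union> {{V 1 s j, V 2 s' j} | s s' j. s \<in> {1..3} \<and> s' \<in> {1..3} \<and> j \<in> {1..n}}
   \<union> {{U r s i, V 1 s' j} | r s i s' j. r \<in> {1..3} \<and> s \<in> {1..7} \<and> i \<in> {1..m}
         \<and> s' \<in> {1..3} \<and> j \<in> {1..n} \<and> L i r = Pos j}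
   \<union> {{U r s i, V 2 s' j} | r s i s' j. r \<in> {1..3} \<and> s \<in> {1..7} \<and> i \<in> {1..m}
         \<and> s' \<in> {1..3} \<and> j \<in> {1..n} \<and> L i r = Neg j}"

definition has_induced_P3 :: "'a set \<Rightarrow> 'a set set \<Rightarrow> bool" where
  "has_induced_P3 W E \<longleftrightarrow>
     (\<exists>a\<in>W. \<exists>b\<in>W. \<exists>c\<in>W. a \<noteq> b \<and> b \<noteq> c \<and> a \<noteq> c
        \<and> {a, b} \<in> E \<and> {b, c} \<in> E \<and> {a, c} \<notin> E)"

definition cluster_deletion_set :: "'a set \<Rightarrow> 'a set set \<Rightarrow> 'a set \<Rightarrow> bool" where
  "cluster_deletion_set W E X \<longleftrightarrow> X \<subseteq> W \<and> \<not> has_induced_P3 (W - X) E"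

definition min_cluster_deletion_set :: "'a set \<Rightarrow> 'a set set \<Rightarrow> 'a set \<Rightarrow> bool" where
  "min_cluster_deletion_set W E X \<longleftrightarrow> cluster_deletion_set W E X
     \<and> (\<forall>Y. cluster_deletion_set W E Y \<longrightarrow> card X \<le> card Y)"

definition side :: "nat \<Rightarrow> nat \<Rightarrow> vtx set" where
  "side r i = {U r s i | s. s \<in> {1..7}}"

end

theory Submission
  imports Defs
begin

text \<open>Fix a clause gadget and a cluster deletion set \<open>X\<close>, and let \<open>S\<^sub>r\<^sub>,\<^sub>i\<close> be the side with the
  most vertices surviving in \<open>G - X\<close>. The vertices of a side are pairwise non-adjacent and
  adjacent to all vertices of the two other sides and of the variable-gadget side \<open>T\<close> of the
  literal \<open>L\<^sub>i\<^sup>r\<close>. Hence two survivors in \<open>S\<^sub>r\<^sub>,\<^sub>i\<close> force the other two sides and \<open>T\<close> to be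
  deleted entirely, and two survivors in \<open>T\<close> force \<open>S\<^sub>r\<^sub>,\<^sub>i\<close> to be deleted. Restoring \<open>S\<^sub>r\<^sub>,\<^sub>i\<close>
  while deleting the other two sides and \<open>T\<close> leaves \<open>S\<^sub>r\<^sub>,\<^sub>i\<close> isolated, so it again gives a cluster
  deletion set, and counting shows that it is strictly smaller unless \<open>X\<close> already has the
  claimed form on the gadget.\<close>

lemma cluster_deletion_set_adj_trans:
  assumes "cluster_deletion_set W E X"
    and "a \<in> W - X" "b \<in> W - X" "c \<in> W - X" "a \<noteq> b" "b \<noteq> c" "a \<noteq> c"
    and "{a, b} \<in> E" "{b, c} \<in> E"
  shows "{a, c} \<in> E"
  using assms unfolding cluster_deletion_set_def has_induced_P3_def by blast

lemma cluster_deletion_set_join: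
  assumes X: "cluster_deletion_set W E X"
    and "A \<subseteq> W" "B \<subseteq> W" "A \<inter> B = {}"
    and indep: "\<And>a a'. a \<in> A \<Longrightarrow> a' \<in> A \<Longrightarrow> {a, a'} \<notin> E"
    and join: "\<And>a b. a \<in> A \<Longrightarrow> b \<in> B \<Longrightarrow> {a, b} \<in> E"
    and two: "2 \<le> card (A - X)"
  shows "B \<subseteq> X"
proof
  fix b assume "b \<in> B"
  show "b \<in> X"
  proof (rule ccontr)
    assume "b \<notin> X"
    have "a1 = a2" if "a1 \<in> A - X" "a2 \<in> A - X" for a1 a2
    proof (rule ccontr)
      assume "a1 \<noteq> a2"
      have "{a1, b} \<in> E" "{b, a2} \<in> E"
        using join that \<open>b \<in> B\<close> by (auto simp: insert_commute)
      then have "{a1, a2} \<in> E"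
        using cluster_deletion_set_adj_trans[OF X] that \<open>a1 \<noteq> a2\<close> \<open>b \<in> B\<close> \<open>b \<notin> X\<close> assms(2-4)
        by blast
      with indep that show False by blast
    qed
    moreover have "finite (A - X)"
      using two by (metis card.infinite not_numeral_le_zero)
    ultimately have "card (A - X) \<le> Suc 0"
      using card_le_Suc0_iff_eq by blast
    with two show False by simp
  qed
qed

lemma cluster_deletion_set_isolate:
  assumes X: "cluster_deletion_set W E X"
    and "Y \<subseteq> W" "X - S \<subseteq> Y"
    and nbrs: "\<And>x y. x \<in> S \<Longrightarrow> {x, y} \<in> E \<Longrightarrow> y \<in> Y"
  shows "cluster_deletion_set W E Y"
  unfolding cluster_deletion_set_def has_induced_P3_def
proof (intro conjI notI \<open>Y \<subseteq> W\<close>)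
  assume "\<exists>a\<in>W - Y. \<exists>b\<in>W - Y. \<exists>c\<in>W - Y. a \<noteq> b \<and> b \<noteq> c \<and> a \<noteq> c
            \<and> {a, b} \<in> E \<and> {b, c} \<in> E \<and> {a, c} \<notin> E"
  then obtain a b c where abc: "a \<in> W - Y" "b \<in> W - Y" "c \<in> W - Y" "a \<noteq> b" "b \<noteq> c" "a \<noteq> c"
    and E: "{a, b} \<in> E" "{b, c} \<in> E" "{a, c} \<notin> E"
    by blast
  have "a \<notin> S" "b \<notin> S" "c \<notin> S"
    using nbrs[of a b] nbrs[of b a] nbrs[of c b] abc E by (auto simp: insert_commute)
  then have "a \<in> W - X" "b \<in> W - X" "c \<in> W - X"
    using abc \<open>X - S \<subseteq> Y\<close> by auto
  with abc E show False
    using cluster_deletion_set_adj_trans[OF X] by blast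
qed

lemma card_Diff_Un_disjoint_le:
  assumes "finite X" "finite R" "R \<inter> S = {}"
  shows "card (X - S \<union> R) + card (X \<inter> S) \<le> card X + card (R - X)"
proof -
  have "X - S \<union> R = (X - S) \<union> (R - X)"
    using assms(3) by blast
  then have "card (X - S \<union> R) \<le> card (X - S) + card (R - X)"
    by (simp add: card_Un_le)
  moreover have "card X = card (X \<inter> S) + card (X - S)"
    using card_Int_Diff[OF \<open>finite X\<close>] .
  ultimately show ?thesis by linarith
qed

lemma ex_max_of_three:
  fixes f :: "nat \<Rightarrow> 'a::linorder"
  shows "\<exists>r r' r''. distinct [r, r', r''] \<and> {r, r', r''} = {1..3} \<and> f r' \<le> f r \<and> f r'' \<le> f r"
proof -
  have perms: "{1..3} = {1, 2, 3 :: nat}" "{1..3} = {2, 1, 3 :: nat}" "{1..3} = {3, 1, 2 :: nat}"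
    by auto
  show ?thesis
  proof (cases "f 2 \<le> f 1 \<and> f 3 \<le> f 1")
    case True
    with perms(1) show ?thesis
      by (intro exI[of _ 1] exI[of _ 2] exI[of _ 3]) simp
  next
    case not_1: False
    show ?thesis
    proof (cases "f 3 \<le> f 2")
      case True
      with not_1 perms(2) show ?thesis
        by (intro exI[of _ 2] exI[of _ 1] exI[of _ 3]) auto
    next
      case False
      with not_1 perms(3) show ?thesis
        by (intro exI[of _ 3] exI[of _ 1] exI[of _ 2]) auto
    qed
  qed
qed

text \<open>\<open>lit_side l\<close> is \<open>T\<^sub>1\<^sub>,\<^sub>j\<close> for \<open>l = x\<^sub>j\<close> and \<open>T\<^sub>2\<^sub>,\<^sub>j\<close> for \<open>l = \<not> x\<^sub>j\<close>: the side of the variable gadget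
  joined to every clause side carrying the literal \<open>l\<close>.\<close>

fun lit_side :: "lit \<Rightarrow> vtx set" where
  "lit_side (Pos j) = {V 1 s j | s. s \<in> {1..3}}"
| "lit_side (Neg j) = {V 2 s j | s. s \<in> {1..3}}"

lemma cd_edges_iff: "e \<in> cd_edges m n L \<longleftrightarrow>
   (\<exists>r s r' s' i. e = {U r s i, U r' s' i} \<and> r \<in> {1..3} \<and> r' \<in> {1..3} \<and> r \<noteq> r'
         \<and> s \<in> {1..7} \<and> s' \<in> {1..7} \<and> i \<in> {1..m})
 \<or> (\<exists>s s' j. e = {V 1 s j, V 2 s' j} \<and> s \<in> {1..3} \<and> s' \<in> {1..3} \<and> j \<in> {1..n})
 \<or> (\<exists>r s i s' j. e = {U r s i, V 1 s' j} \<and> r \<in> {1..3} \<and> s \<in> {1..7} \<and> i \<in> {1..m}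
         \<and> s' \<in> {1..3} \<and> j \<in> {1..n} \<and> L i r = Pos j)
 \<or> (\<exists>r s i s' j. e = {U r s i, V 2 s' j} \<and> r \<in> {1..3} \<and> s \<in> {1..7} \<and> i \<in> {1..m}
         \<and> s' \<in> {1..3} \<and> j \<in> {1..n} \<and> L i r = Neg j)"
  unfolding cd_edges_def by blast

lemma side_side_edge:
  assumes "r \<in> {1..3}" "r' \<in> {1..3}" "r \<noteq> r'" "u \<in> side r i" "u' \<in> side r' i" "i \<in> {1..m}"
  shows "{u, u'} \<in> cd_edges m n L"
  using assms unfolding cd_edges_iff side_def by blast

lemma side_lit_side_edge:
  assumes "r \<in> {1..3}" "i \<in> {1..m}" "lit_var (L i r) \<in> {1..n}"
    and "u \<in> side r i" "v \<in> lit_side (L i r)"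
  shows "{u, v} \<in> cd_edges m n L"
  using assms by (cases "L i r") (auto simp: cd_edges_iff side_def)

lemma side_independent: "u \<in> side r i \<Longrightarrow> u' \<in> side r i \<Longrightarrow> {u, u'} \<notin> cd_edges m n L"
  by (auto simp: cd_edges_iff side_def doubleton_eq_iff)

lemma lit_side_independent: "v \<in> lit_side l \<Longrightarrow> v' \<in> lit_side l \<Longrightarrow> {v, v'} \<notin> cd_edges m n L"
  by (cases l) (auto simp: cd_edges_iff doubleton_eq_iff)

lemma side_neighbour:
  assumes "u \<in> side r i" "{u, y} \<in> cd_edges m n L"
  shows "(\<exists>r'\<in>{1..3}. r' \<noteq> r \<and> y \<in> side r' i) \<or> y \<in> lit_side (L i r)"
  using assms unfolding cd_edges_iff side_def
  by (elim disjE exE conjE) (auto simp: doubleton_eq_iff)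

lemma side_disjoint: "r \<noteq> r' \<Longrightarrow> side r i \<inter> side r' i = {}"
  by (auto simp: side_def)

lemma side_lit_side_disjoint: "side r i \<inter> lit_side l = {}"
  by (cases l) (auto simp: side_def)

lemma side_subset_cd_vertices: "r \<in> {1..3} \<Longrightarrow> i \<in> {1..m} \<Longrightarrow> side r i \<subseteq> cd_vertices m n"
  unfolding side_def cd_vertices_def by auto

lemma lit_side_subset_cd_vertices: "lit_var l \<in> {1..n} \<Longrightarrow> lit_side l \<subseteq> cd_vertices m n"
  by (cases l) (auto simp: cd_vertices_def)

lemma finite_cd_vertices: "finite (cd_vertices m n)"
proof -
  have "cd_vertices m n = (\<lambda>(r, s, i). U r s i) ` ({1..3} \<times> {1..7} \<times> {1..m})
                        \<union> (\<lambda>(r, s, j). V r s j) ` ({1..2} \<times> {1..3} \<times> {1..n})"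
    unfolding cd_vertices_def by (auto simp: image_iff)
  then show ?thesis
    by simp
qed

lemma card_side: "card (side r i) = 7"
  unfolding side_def Setcompr_eq_image by (simp add: card_image inj_on_def)

lemma card_lit_side: "card (lit_side l) = 3"
  by (cases l) (simp_all del: atLeastAtMost_iff add: Setcompr_eq_image card_image inj_on_def)

lemma finite_side: "finite (side r i)"
  using card_side by (metis card.infinite zero_neq_numeral)

lemma finite_lit_side: "finite (lit_side l)"
  using card_lit_side by (metis card.infinite zero_neq_numeral)

lemma cluster_deletion_set_resolve_clause:
  assumes X: "cluster_deletion_set (cd_vertices m n) (cd_edges m n L) X"
    and i: "i \<in> {1..m}" and lit: "lit_var (L i r) \<in> {1..n}"
    and r: "{r, r', r''} = {1..3}"
  shows "cluster_deletion_set (cd_vertices m n) (cd_edges m n L)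
           (X - side r i \<union> (side r' i \<union> side r'' i \<union> lit_side (L i r)))"
proof (rule cluster_deletion_set_isolate[OF X])
  have "r' \<in> {1..3}" "r'' \<in> {1..3}" and others: "\<And>q. q \<in> {1..3} \<Longrightarrow> q \<noteq> r \<Longrightarrow> q = r' \<or> q = r''"
    using r by blast+
  show "X - side r i \<union> (side r' i \<union> side r'' i \<union> lit_side (L i r)) \<subseteq> cd_vertices m n"
    using X side_subset_cd_vertices[OF \<open>r' \<in> {1..3}\<close> i] side_subset_cd_vertices[OF \<open>r'' \<in> {1..3}\<close> i]
      lit_side_subset_cd_vertices[OF lit]
    unfolding cluster_deletion_set_def by blast
  show "X - side r i \<subseteq> X - side r i \<union> (side r' i \<union> side r'' i \<union> lit_side (L i r))"
    by blast
  show "y \<in> X - side r i \<union> (side r' i \<union> side r'' i \<union> lit_side (L i r))"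
    if "x \<in> side r i" "{x, y} \<in> cd_edges m n L" for x y
    using side_neighbour[OF that] others by blast
qed

lemma side_survivors_delete_side:
  assumes X: "cluster_deletion_set (cd_vertices m n) (cd_edges m n L) X"
    and "i \<in> {1..m}" "r \<in> {1..3}" "q \<in> {1..3}" "r \<noteq> q"
    and "2 \<le> card (side r i - X)"
  shows "side q i \<subseteq> X"
proof (rule cluster_deletion_set_join[OF X])
  show "side r i \<subseteq> cd_vertices m n" "side q i \<subseteq> cd_vertices m n"
    using assms(2-4) by (simp_all add: side_subset_cd_vertices)
  show "side r i \<inter> side q i = {}"
    using assms(5) by (rule side_disjoint)
  show "{u, u'} \<notin> cd_edges m n L" if "u \<in> side r i" "u' \<in> side r i" for u u'
    using that by (rule side_independent)
  show "{u, u'} \<in> cd_edges m n L" if "u \<in> side r i" "u' \<in> side q i" for u u'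
    using assms(3-5) that assms(2) by (rule side_side_edge)
qed (fact assms(6))

lemma side_survivors_delete_lit_side:
  assumes X: "cluster_deletion_set (cd_vertices m n) (cd_edges m n L) X"
    and "i \<in> {1..m}" "r \<in> {1..3}" "lit_var (L i r) \<in> {1..n}"
    and "2 \<le> card (side r i - X)"
  shows "lit_side (L i r) \<subseteq> X"
proof (rule cluster_deletion_set_join[OF X])
  show "side r i \<subseteq> cd_vertices m n" "lit_side (L i r) \<subseteq> cd_vertices m n"
    using assms(2-4) by (simp_all add: side_subset_cd_vertices lit_side_subset_cd_vertices)
  show "side r i \<inter> lit_side (L i r) = {}"
    by (rule side_lit_side_disjoint)
  show "{u, u'} \<notin> cd_edges m n L" if "u \<in> side r i" "u' \<in> side r i" for u u'
    using that by (rule side_independent)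
  show "{u, v} \<in> cd_edges m n L" if "u \<in> side r i" "v \<in> lit_side (L i r)" for u v
    using assms(3,2,4) that by (rule side_lit_side_edge)
qed (fact assms(5))

lemma lit_side_survivors_delete_side:
  assumes X: "cluster_deletion_set (cd_vertices m n) (cd_edges m n L) X"
    and "i \<in> {1..m}" "r \<in> {1..3}" "lit_var (L i r) \<in> {1..n}"
    and "2 \<le> card (lit_side (L i r) - X)"
  shows "side r i \<subseteq> X"
proof (rule cluster_deletion_set_join[OF X])
  show "lit_side (L i r) \<subseteq> cd_vertices m n" "side r i \<subseteq> cd_vertices m n"
    using assms(2-4) by (simp_all add: side_subset_cd_vertices lit_side_subset_cd_vertices)
  show "lit_side (L i r) \<inter> side r i = {}"
    using side_lit_side_disjoint by blast
  show "{v, v'} \<notin> cd_edges m n L" if "v \<in> lit_side (L i r)" "v' \<in> lit_side (L i r)" for v v'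
    using that by (rule lit_side_independent)
  show "{v, u} \<in> cd_edges m n L" if "v \<in> lit_side (L i r)" "u \<in> side r i" for u v
  proof -
    have "{u, v} \<in> cd_edges m n L"
      using assms(3,2,4) that(2,1) by (rule side_lit_side_edge)
    then show ?thesis
      by (simp add: insert_commute)
  qed
qed (fact assms(5))

lemma smaller_cluster_deletion_set:
  assumes X: "cluster_deletion_set (cd_vertices m n) (cd_edges m n L) X"
    and i: "i \<in> {1..m}" and lit: "lit_var (L i r) \<in> {1..n}"
    and r: "distinct [r, r', r'']" "{r, r', r''} = {1..3}"
    and r_max: "card (side r' i - X) \<le> card (side r i - X)" "card (side r'' i - X) \<le> card (side r i - X)"
    and unresolved: "\<not> (side r i \<inter> X = {} \<and> side r' i \<subseteq> X \<and> side r'' i \<subseteq> X)"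
  shows "\<exists>Y. cluster_deletion_set (cd_vertices m n) (cd_edges m n L) Y \<and> card Y < card X"
proof -
  define a where "a q = card (side q i - X)" for q
  define t where "t = card (lit_side (L i r) - X)"
  define R where "R = side r' i \<union> side r'' i \<union> lit_side (L i r)"
  have rs: "r \<in> {1..3}" "r' \<in> {1..3}" "r'' \<in> {1..3}" "r' \<noteq> r" "r'' \<noteq> r"
    using r by auto
  have finX: "finite X"
    using X finite_cd_vertices finite_subset unfolding cluster_deletion_set_def by blast
  have a_split: "card (X \<inter> side q i) + a q = 7" for q
    using card_Int_Diff[OF finite_side, of q i X] card_side unfolding a_def by (simp add: Int_commute)
  have a_0: "a q = 0 \<longleftrightarrow> side q i \<subseteq> X" for q
    using finite_side[of q i] unfolding a_def by auto
  have a_7: "a q = 7 \<longleftrightarrow> side q i \<inter> X = {}" for q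
    using a_split[of q] finite_side[of q i] by (auto simp: Int_commute)
  have t_3: "t \<le> 3"
    using card_mono[OF finite_lit_side Diff_subset, of "L i r" X] by (simp add: t_def card_lit_side)
  have crowded: "a r' = 0" "a r'' = 0" "t = 0" if "2 \<le> a r"
  proof -
    have two: "2 \<le> card (side r i - X)"
      using that unfolding a_def .
    show "a r' = 0" "a r'' = 0"
      using side_survivors_delete_side[OF X i rs(1) _ _ two] rs a_0 by auto
    show "t = 0"
      using side_survivors_delete_lit_side[OF X i rs(1) lit two] by (simp add: t_def Diff_eq_empty_iff[THEN iffD2])
  qed
  have sparse: "a r = 0 \<or> t \<le> 1"
  proof (rule disjCI)
    assume "\<not> t \<le> 1"
    then have "2 \<le> card (lit_side (L i r) - X)"
      unfolding t_def by simp
    then show "a r = 0"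
      using lit_side_survivors_delete_side[OF X i rs(1) lit] a_0 by blast
  qed
  have cheaper: "a r' + a r'' + t < card (X \<inter> side r i)"
  proof (cases "2 \<le> a r")
    case True
    then have "a r' = 0" "a r'' = 0" "t = 0"
      by (rule crowded)+
    moreover from this have "a r \<noteq> 7"
      using unresolved by (simp add: a_0 a_7)
    ultimately show ?thesis
      using a_split[of r] by linarith
  next
    case False
    then show ?thesis
      using sparse t_3 r_max[folded a_def] a_split[of r] by linarith
  qed
  have "card (R - X) \<le> card (side r' i - X \<union> (side r'' i - X)) + t"
    unfolding R_def Un_Diff t_def by (rule card_Un_le)
  also have "\<dots> \<le> a r' + a r'' + t"
    using card_Un_le[of "side r' i - X" "side r'' i - X"] unfolding a_def by simp
  finally have cost: "card (R - X) \<le> a r' + a r'' + t" .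
  have exchange: "card (X - side r i \<union> R) + card (X \<inter> side r i) \<le> card X + card (R - X)"
  proof (rule card_Diff_Un_disjoint_le[OF finX])
    show "finite R"
      unfolding R_def using finite_side finite_lit_side by blast
    show "R \<inter> side r i = {}"
      unfolding R_def using side_disjoint[OF rs(4)] side_disjoint[OF rs(5)] side_lit_side_disjoint
      by blast
  qed
  show ?thesis
  proof (intro exI conjI)
    show "cluster_deletion_set (cd_vertices m n) (cd_edges m n L) (X - side r i \<union> R)"
      unfolding R_def using X i lit r(2) by (rule cluster_deletion_set_resolve_clause)
    show "card (X - side r i \<union> R) < card X"
      using exchange cost cheaper by linarith
  qed
qed

theorem lemma10:
  fixes m n :: nat and L :: "nat \<Rightarrow> nat \<Rightarrow> lit" and X :: "vtx set"
  assumes "\<forall>i\<in>{1..m}. \<forall>r\<in>{1..3}. lit_var (L i r) \<in> {1..n}"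
    and "min_cluster_deletion_set (cd_vertices m n) (cd_edges m n L) X"
  shows "\<forall>i\<in>{1..m}. \<exists>r\<in>{1..3}. side r i \<inter> X = {}
           \<and> (\<forall>r'\<in>{1..3}. r' \<noteq> r \<longrightarrow> side r' i \<subseteq> X)"
proof (rule ccontr)
  assume "\<not> ?thesis"
  then obtain i where i: "i \<in> {1..m}"
    and unresolved: "\<not> (\<exists>r\<in>{1..3}. side r i \<inter> X = {} \<and> (\<forall>r'\<in>{1..3}. r' \<noteq> r \<longrightarrow> side r' i \<subseteq> X))"
    by blast
  obtain r r' r'' where r: "distinct [r, r', r'']" "{r, r', r''} = {1..3}"
    and r_max: "card (side r' i - X) \<le> card (side r i - X)" "card (side r'' i - X) \<le> card (side r i - X)"
    using ex_max_of_three[of "\<lambda>q. card (side q i - X)"] by blast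
  have "r \<in> {1..3}" and "\<And>q. q \<in> {1..3} \<Longrightarrow> q \<noteq> r \<Longrightarrow> q = r' \<or> q = r''"
    using r(2) by blast+
  then have "\<not> (side r i \<inter> X = {} \<and> side r' i \<subseteq> X \<and> side r'' i \<subseteq> X)"
    using unresolved by blast
  moreover have "lit_var (L i r) \<in> {1..n}"
    using assms(1) i r(2) by blast
  moreover have X: "cluster_deletion_set (cd_vertices m n) (cd_edges m n L) X"
    using assms(2) unfolding min_cluster_deletion_set_def by blast
  ultimately obtain Y where "cluster_deletion_set (cd_vertices m n) (cd_edges m n L) Y" "card Y < card X"
    using smaller_cluster_deletion_set[OF X i _ r r_max] by blast
  with assms(2) show False
    unfolding min_cluster_deletion_set_def by (meson not_le)
qed

end
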